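(* Let $1\le p<2$, let $f\in\mathcal H_0$, let $u$ solve the gradient flow $\partial_tu+\partial J(u)\ni0$, $u(0)=f$, with (finite) extinction time $T_{\mathrm{ex}}$, and set $\lambda:=\frac{1}{(2-p)T_{\mathrm{ex}}}$, $a(t):=(1-(2-p)\lambda t)^{\frac1{2-p}}$ and $w(t):=u(t)/a(t)$ for $0\le t<T_{\mathrm{ex}}$. Assume that there are $w_*\in\mathcal H$ and a sequence $t_k\nearrow T_{\mathrm{ex}}$ with $w(t_k)\to w_*$ strongly in $\mathcal H$ (or that $w(t)\to w_*$ strongly as $t\to T_{\mathrm{ex}}$). Then $\lambda w_*\in\partial J(w_* )$, $w_*\ne 0$, and $\|w_*\|\le\|f\|$.
   Context: $\mathcal H$ is a real Hilbert space with inner product $\langle\cdot,\cdot\rangle$ and norm $\|\cdot\|$. $J:\mathcal H\to\mathbb R\cup\{\infty\}$ is convex, lower semicontinuous, proper, with dense effective domain, and absolutely $p$-homogeneous: $J(cu)=|c|^pJ(u)$ for $c\ne0$ and $J(0)=0$. Standing coercivity assumption: $\lambda_1:=\inf_{u\in\mathcal H_0}pJ(u)/\|u\|^p>0$. $\partial J(u)=\{\zeta: J(u)+\langle\zeta,v-u\rangle\le J(v)\ \forall v\}$; $\mathcal N(J)=\{u:J(u)=0\}$; $\mathcal H_0:=\mathcal N(J)^\perp\setminus\{0\}$. The gradient flow solution (Brezis) is the unique continuous $u:[0,\infty)\to\mathcal H$, Lipschitz on $[\delta,\infty)$ for all $\delta>0$, right-differentiable on $(0,\infty)$ with $u(0)=f$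 and $\partial_t^+u(t)=-\zeta(t)$, $\zeta(t)$ the minimal-norm element of $\partial J(u(t))$. $T_{\mathrm{ex}}:=\inf\{T>0:u(t)=0\ \forall t\ge T\}$, which is finite for $p<2$. The function $a$ is the solution of $a'=-\lambda a^{p-1}$, $a(0)=1$, i.e. $a(t)=(1-t/T_{\mathrm{ex}})^{1/(2-p)}$. *)

theory Defs
  imports "HOL-Analysis.Analysis"
begin

(* Functionals J : H -> R \<union> {\<infinity>} are modelled as 'a \<Rightarrow> ereal, never taking -\<infinity> (properness). *)

definition ereal_convex :: "('a::real_vector \<Rightarrow> ereal) \<Rightarrow> bool" where
  "ereal_convex J \<longleftrightarrow>
     (\<forall>x y t. 0 \<le> t \<and> t \<le> 1 \<longrightarrow>
        J (t *\<^sub>R x + (1 - t) *\<^sub>R y) \<le> ereal t * J x + ereal (1 - t) * J y)"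

definition ereal_lsc :: "('a::topological_space \<Rightarrow> ereal) \<Rightarrow> bool" where
  "ereal_lsc J \<longleftrightarrow> (\<forall>c. closed {x. J x \<le> c})"

definition ereal_proper :: "('a \<Rightarrow> ereal) \<Rightarrow> bool" where
  "ereal_proper J \<longleftrightarrow> (\<forall>x. J x \<noteq> -\<infinity>) \<and> (\<exists>x. J x \<noteq> \<infinity>)"

definition eff_dom :: "('a \<Rightarrow> ereal) \<Rightarrow> 'a set" where
  "eff_dom J = {x. J x < \<infinity>}"

definition abs_p_homogeneous :: "real \<Rightarrow> ('a::real_vector \<Rightarrow> ereal) \<Rightarrow> bool" where
  "abs_p_homogeneous p J \<longleftrightarrow>
     (\<forall>c u. c \<noteq> 0 \<longrightarrow> J (c *\<^sub>R u) = ereal (\<bar>c\<bar> powr p) * J u) \<and> J 0 = 0"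

definition subdiff :: "('a::real_inner \<Rightarrow> ereal) \<Rightarrow> 'a \<Rightarrow> 'a set" where
  "subdiff J u = {\<zeta>. \<forall>v. J u + ereal (\<zeta> \<bullet> (v - u)) \<le> J v}"

definition null_set :: "('a \<Rightarrow> ereal) \<Rightarrow> 'a set" where
  "null_set J = {u. J u = 0}"

definition H0 :: "('a::real_inner \<Rightarrow> ereal) \<Rightarrow> 'a set" where
  "H0 J = {x. \<forall>y\<in>null_set J. x \<bullet> y = 0} - {0}"

definition lambda1 :: "real \<Rightarrow> ('a::real_inner \<Rightarrow> ereal) \<Rightarrow> ereal" where
  "lambda1 p J = (INF u\<in>H0 J. ereal p * J u / ereal (norm u powr p))"

definition min_norm_elem :: "'a::real_normed_vector \<Rightarrow> 'a set \<Rightarrow> bool" where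
  "min_norm_elem \<zeta> S \<longleftrightarrow> \<zeta> \<in> S \<and> (\<forall>\<eta>\<in>S. norm \<zeta> \<le> norm \<eta>)"

(* Brezis gradient flow solution of \<partial>_t u + \<partial>J(u) \<ni> 0, u(0) = f (only t \<ge> 0 matters) *)
definition gradient_flow :: "('a::real_inner \<Rightarrow> ereal) \<Rightarrow> 'a \<Rightarrow> (real \<Rightarrow> 'a) \<Rightarrow> bool" where
  "gradient_flow J f u \<longleftrightarrow>
     continuous_on {0..} u \<and>
     (\<forall>\<delta>>0. \<exists>L. L-lipschitz_on {\<delta>..} u) \<and>
     u 0 = f \<and>
     (\<forall>t>0. \<exists>\<zeta>. min_norm_elem \<zeta> (subdiff J (u t)) \<and>
                 (u has_vector_derivative (- \<zeta>)) (at t within {t..}))"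

definition extinction_time :: "(real \<Rightarrow> 'a::zero) \<Rightarrow> real" where
  "extinction_time u = Inf {T. T > 0 \<and> (\<forall>t\<ge>T. u t = 0)}"

end

(*
  Along the flow the Rayleigh quotient R = p J(u) / |u|^p is nonincreasing and
  d/dt |u|^q = - q R, where q = 2 - p. Hence |u(s)|^q / (T_ex - s), which is |w(s)|^q / T_ex,
  is nonincreasing: this gives |w| <= |f|, and R >= lambda_1 > 0 keeps |w| away from 0, so
  w_s <> 0. Let l = |w_s|. Since |w(t_k)|^q tends to l^q, the same identity forces R below
  lambda l^q + e eventually, so p J(w(s)) = R |w(s)|^p <= lambda l^2 + d near T_ex, and lower
  semicontinuity gives p J(w_s) <= lambda l^2. Testing the subgradient inequality of zeta(s)
  at a(s) v and comparing along [s, T_ex] gives lambda <w_s, v> <= J(v) + (p - 1) lambda l^2 / p.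
  Together: J(w_s) + lambda <w_s, v - w_s> <= J(v).
  The monotonicity of R uses the right continuity of the minimal section zeta, which follows
  from the contraction property of the flow and the stability of minimal-norm subgradients
  under epsilon-enlargement of the subdifferential.
*)

theory Submission
  imports Defs
begin

section \<open>Monotonicity from one-sided derivatives\<close>

definition right_dini_nonpos :: "(real \<Rightarrow> real) \<Rightarrow> real \<Rightarrow> bool" where
  "right_dini_nonpos g t \<longleftrightarrow> (\<forall>\<epsilon>>0. \<forall>\<^sub>F s in at_right t. g s \<le> g t + \<epsilon> * (s - t))"

lemma le_slope_if_right_dini_nonpos:
  fixes g :: "real \<Rightarrow> real"
  assumes ab: "a < b" and cont: "continuous_on {a..b} g"
    and dini: "\<And>t. a \<le> t \<Longrightarrow> t < b \<Longrightarrow> right_dini_nonpos g t" and \<epsilon>: "\<epsilon> > 0"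
  shows "g b \<le> g a + \<epsilon> * (b - a)"
proof -
  define S where "S = {a..b} \<inter> (\<lambda>s. g s - \<epsilon> * (s - a)) -` {..g a}"
  have "continuous_on {a..b} (\<lambda>s. g s - \<epsilon> * (s - a))" by (intro continuous_intros cont)
  then have "closed S" unfolding S_def
    by (rule continuous_closed_preimage[OF _ closed_atLeastAtMost closed_atMost])
  moreover have "a \<in> S" using ab unfolding S_def by auto
  moreover have bdd: "bdd_above S" unfolding S_def by (auto intro: bdd_aboveI[of _ b])
  ultimately have "Sup S \<in> S" using closed_contains_Sup by blast
  then have m: "a \<le> Sup S" "Sup S \<le> b" "g (Sup S) \<le> g a + \<epsilon> * (Sup S - a)"
    unfolding S_def by (auto simp: algebra_simps)
  show ?thesis
  proof (rule ccontr)
    assume "\<not> ?thesis"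
    then have mb: "Sup S < b" using m by (cases "Sup S = b") auto
    have "\<forall>\<^sub>F s in at_right (Sup S). g s \<le> g (Sup S) + \<epsilon> * (s - Sup S)"
      using dini[OF m(1) mb] \<epsilon> unfolding right_dini_nonpos_def by blast
    moreover have "\<forall>\<^sub>F s in at_right (Sup S). s < b"
      using mb unfolding eventually_at_right_field by auto
    ultimately have "\<forall>\<^sub>F s in at_right (Sup S). g s \<le> g (Sup S) + \<epsilon> * (s - Sup S) \<and> s < b"
      by eventually_elim auto
    then obtain c where c: "c > Sup S"
      and gc: "\<And>s. Sup S < s \<Longrightarrow> s < c \<Longrightarrow> g s \<le> g (Sup S) + \<epsilon> * (s - Sup S) \<and> s < b"
      unfolding eventually_at_right_field by blast
    define s where "s = (Sup S + c) / 2"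
    have s: "Sup S < s" "s < c" using c by (auto simp: s_def)
    with gc[OF s] m have "s \<in> S" unfolding S_def by (auto simp: algebra_simps)
    then show False using s bdd cSup_upper by fastforce
  qed
qed

lemma le_if_right_dini_nonpos:
  fixes g :: "real \<Rightarrow> real"
  assumes ab: "a \<le> b" and cont: "continuous_on {a..b} g"
    and dini: "\<And>t. a < t \<Longrightarrow> t < b \<Longrightarrow> right_dini_nonpos g t"
  shows "g b \<le> g a"
proof (cases "a = b")
  case False
  then have ab': "a < b" using ab by auto
  have le_inner: "g b \<le> g a'" if a': "a < a'" "a' < b" for a'
  proof (rule field_le_epsilon)
    fix e :: real assume "0 < e"
    then have "g b \<le> g a' + e / (b - a') * (b - a')"
      using a' by (intro le_slope_if_right_dini_nonpos continuous_on_subset[OF cont] dini) auto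
    then show "g b \<le> g a' + e" using a' by simp
  qed
  have "(g \<longlongrightarrow> g a) (at a within {a..b})" using cont ab by (simp add: continuous_on_def)
  then have "(g \<longlongrightarrow> g a) (at_right a)" using at_within_Icc_at_right[OF ab'] by simp
  moreover have "\<forall>\<^sub>F x in at_right a. g b \<le> g x"
    unfolding eventually_at_right_field using ab' le_inner by blast
  ultimately show ?thesis by (rule tendsto_le[OF trivial_limit_at_right_real _ tendsto_const])
qed simp

lemma right_dini_nonpos_if_majorant:
  fixes g G :: "real \<Rightarrow> real"
  assumes "(G has_real_derivative D) (at t within {t..})" "D \<le> 0" "g t = G t"
    "\<forall>\<^sub>F s in at_right t. g s \<le> G s"
  shows "right_dini_nonpos g t"
  unfolding right_dini_nonpos_def
proof (intro allI impI)
  fix \<epsilon> :: real assume "\<epsilon> > 0"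
  have "(G has_real_derivative D) (at_right t)"
    using assms(1) by (rule has_field_derivative_subset) auto
  then have "((\<lambda>s. (G s - G t) / (s - t)) \<longlongrightarrow> D) (at_right t)"
    by (simp add: has_field_derivative_iff)
  then have "\<forall>\<^sub>F s in at_right t. (G s - G t) / (s - t) < D + \<epsilon>"
    using \<open>\<epsilon> > 0\<close> by (intro order_tendstoD) auto
  moreover have "\<forall>\<^sub>F s in at_right t. s > t" by (simp add: eventually_at_filter)
  ultimately show "\<forall>\<^sub>F s in at_right t. g s \<le> g t + \<epsilon> * (s - t)"
    using assms(4)
  proof eventually_elim
    case (elim s)
    then have "G s - G t < (D + \<epsilon>) * (s - t)" by (simp add: pos_divide_less_eq)
    also have "\<dots> \<le> \<epsilon> * (s - t)" using elim assms(2) by (intro mult_right_mono) auto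
    finally show ?case using elim assms(3) by linarith
  qed
qed

lemma le_if_right_derivative_nonpos:
  fixes g :: "real \<Rightarrow> real"
  assumes "a \<le> b" "continuous_on {a..b} g"
    and "\<And>t. a < t \<Longrightarrow> t < b \<Longrightarrow> (g has_real_derivative g' t) (at t within {t..})"
    and "\<And>t. a < t \<Longrightarrow> t < b \<Longrightarrow> g' t \<le> 0"
  shows "g b \<le> g a"
proof (rule le_if_right_dini_nonpos[OF assms(1,2)])
  fix t assume "a < t" "t < b"
  with assms(3,4) show "right_dini_nonpos g t"
    by (intro right_dini_nonpos_if_majorant[where G = g]) auto
qed

lemma has_vector_derivative_imp_difference_quotient:
  fixes f :: "real \<Rightarrow> 'b::real_normed_vector"
  assumes "(f has_vector_derivative f') (at x within S)"
  shows "((\<lambda>y. inverse (y - x) *\<^sub>R (f y - f x)) \<longlongrightarrow> f') (at x within S)"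
proof -
  have "((\<lambda>y. norm (f y - f x - (y - x) *\<^sub>R f') / norm (y - x)) \<longlongrightarrow> 0) (at x within S)"
    using assms unfolding has_vector_derivative_def has_derivative_iff_norm by auto
  moreover have "\<forall>\<^sub>F y in at x within S.
      norm (f y - f x - (y - x) *\<^sub>R f') / norm (y - x) = norm (inverse (y - x) *\<^sub>R (f y - f x) - f')"
    unfolding eventually_at_filter
  proof (intro always_eventually allI impI)
    fix y assume "y \<noteq> x" "y \<in> S"
    then have "inverse (y - x) *\<^sub>R (f y - f x) - f' = inverse (y - x) *\<^sub>R (f y - f x - (y - x) *\<^sub>R f')"
      by (simp add: scaleR_diff_right)
    then show "norm (f y - f x - (y - x) *\<^sub>R f') / norm (y - x) = norm (inverse (y - x) *\<^sub>R (f y - f x) - f')"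
      by (simp add: divide_inverse abs_inverse mult.commute)
  qed
  ultimately have "((\<lambda>y. norm (inverse (y - x) *\<^sub>R (f y - f x) - f')) \<longlongrightarrow> 0) (at x within S)"
    by (rule Lim_transform_eventually)
  then show ?thesis by (simp add: tendsto_norm_zero_iff LIM_zero_iff)
qed

lemma has_real_derivative_inner:
  assumes "(x has_vector_derivative x') (at t within S)" "(y has_vector_derivative y') (at t within S)"
  shows "((\<lambda>s. x s \<bullet> y s) has_real_derivative (x t \<bullet> y' + x' \<bullet> y t)) (at t within S)"
  using bounded_bilinear.has_vector_derivative[OF bounded_bilinear_inner assms]
  by (simp add: has_real_derivative_iff_has_vector_derivative)

lemma parallelogram_midpoint:
  fixes a b :: "'a::real_inner"
  shows "norm (a - b) ^ 2 = 2 * norm a ^ 2 + 2 * norm b ^ 2 - 4 * norm ((1/2) *\<^sub>R (a + b)) ^ 2"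
  by (simp add: power2_norm_eq_inner inner_diff_left inner_diff_right inner_add_left
      inner_add_right algebra_simps inner_commute)

lemma norm_midpoint_sq_le:
  fixes a b :: "'a::real_inner"
  assumes "norm a \<le> norm b" "\<eta> \<le> norm (a - b)" "0 \<le> \<eta>"
  shows "norm ((1/2) *\<^sub>R (a + b)) ^ 2 \<le> norm b ^ 2 - \<eta> ^ 2 / 4"
proof -
  have "\<eta> ^ 2 \<le> norm (a - b) ^ 2" "norm a ^ 2 \<le> norm b ^ 2"
    using assms by (auto intro: power_mono)
  then show ?thesis using parallelogram_midpoint[of a b] by linarith
qed

lemma Cauchy_if_sq_dist_le:
  fixes y :: "nat \<Rightarrow> 'a::real_normed_vector" and d :: "nat \<Rightarrow> real"
  assumes "Cauchy d"
    and dist_y: "\<And>m n. norm (y m - y n) ^ 2 \<le> 2 * \<bar>d m - d n\<bar> + 2 * (1 / Suc m) + 2 * (1 / Suc n)"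
  shows "Cauchy y"
proof (rule metric_CauchyI)
  fix e :: real assume "e > 0"
  then obtain K\<^sub>1 where K\<^sub>1: "\<And>m n. K\<^sub>1 \<le> m \<Longrightarrow> K\<^sub>1 \<le> n \<Longrightarrow> \<bar>d m - d n\<bar> < e ^ 2 / 8"
    using metric_CauchyD[OF \<open>Cauchy d\<close>, of "e ^ 2 / 8"] by (auto simp: dist_real_def)
  obtain K\<^sub>2 where K\<^sub>2: "1 / Suc K\<^sub>2 < e ^ 2 / 8"
    using reals_Archimedean[of "e ^ 2 / 8"] \<open>e > 0\<close> by (auto simp: inverse_eq_divide)
  have small: "1 / Suc n < e ^ 2 / 8" if "K\<^sub>2 \<le> n" for n
  proof -
    have "1 / real (Suc n) \<le> 1 / Suc K\<^sub>2" using that by (simp add: frac_le)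
    then show ?thesis using K\<^sub>2 by linarith
  qed
  have "dist (y m) (y n) < e" if "max K\<^sub>1 K\<^sub>2 \<le> m" "max K\<^sub>1 K\<^sub>2 \<le> n" for m n
  proof -
    have "\<bar>d m - d n\<bar> < e ^ 2 / 8" "1 / Suc m < e ^ 2 / 8" "1 / Suc n < e ^ 2 / 8"
      using that K\<^sub>1 small by auto
    moreover have "e ^ 2 > 0" using \<open>e > 0\<close> by simp
    ultimately have "norm (y m - y n) ^ 2 < e ^ 2" using dist_y[of m n] by argo
    then show ?thesis using \<open>e > 0\<close> by (simp add: dist_norm power_less_imp_less_base)
  qed
  then show "\<exists>K. \<forall>m\<ge>K. \<forall>n\<ge>K. dist (y m) (y n) < e" by blast
qed

section \<open>Subgradients and \<open>\<epsilon>\<close>-subgradients\<close>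

lemma subdiff_imp_finite:
  assumes "ereal_proper J" "\<zeta> \<in> subdiff J x"
  shows "J x \<noteq> \<infinity>"
proof -
  obtain v where "J v \<noteq> \<infinity>" using assms(1) by (auto simp: ereal_proper_def)
  moreover have "J x + ereal (\<zeta> \<bullet> (v - x)) \<le> J v" using assms(2) by (auto simp: subdiff_def)
  ultimately show ?thesis by auto
qed

lemma subgradient_inequality:
  assumes "ereal_proper J" "\<zeta> \<in> subdiff J x" "J v \<noteq> \<infinity>"
  shows "real_of_ereal (J x) + \<zeta> \<bullet> (v - x) \<le> real_of_ereal (J v)"
proof -
  have "J x + ereal (\<zeta> \<bullet> (v - x)) \<le> J v" using assms(2) by (auto simp: subdiff_def)
  moreover have "J x \<noteq> \<infinity>" "J x \<noteq> -\<infinity>" "J v \<noteq> -\<infinity>"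
    using subdiff_imp_finite[OF assms(1,2)] assms(1) by (auto simp: ereal_proper_def)
  ultimately show ?thesis using assms(3) by (cases "J x"; cases "J v") auto
qed

lemma subdiff_monotone:
  assumes "ereal_proper J" "\<zeta>\<^sub>1 \<in> subdiff J x\<^sub>1" "\<zeta>\<^sub>2 \<in> subdiff J x\<^sub>2"
  shows "(\<zeta>\<^sub>1 - \<zeta>\<^sub>2) \<bullet> (x\<^sub>1 - x\<^sub>2) \<ge> 0"
proof -
  have "J x\<^sub>1 \<noteq> \<infinity>" "J x\<^sub>2 \<noteq> \<infinity>"
    using subdiff_imp_finite[OF assms(1)] assms(2,3) by blast+
  then have "real_of_ereal (J x\<^sub>1) + \<zeta>\<^sub>1 \<bullet> (x\<^sub>2 - x\<^sub>1) \<le> real_of_ereal (J x\<^sub>2)"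
    and "real_of_ereal (J x\<^sub>2) + \<zeta>\<^sub>2 \<bullet> (x\<^sub>1 - x\<^sub>2) \<le> real_of_ereal (J x\<^sub>1)"
    using subgradient_inequality[OF assms(1)] assms(2,3) by blast+
  then show ?thesis by (simp add: inner_diff_left inner_diff_right)
qed

definition eps_subdiff :: "('a::real_inner \<Rightarrow> ereal) \<Rightarrow> real \<Rightarrow> 'a \<Rightarrow> 'a set" where
  "eps_subdiff J \<epsilon> x = {\<xi>. \<forall>v. J x + ereal (\<xi> \<bullet> (v - x)) \<le> J v + ereal \<epsilon>}"

lemma eps_subdiff_mono:
  assumes "\<epsilon> \<le> \<epsilon>'"
  shows "eps_subdiff J \<epsilon> x \<subseteq> eps_subdiff J \<epsilon>' x"
proof -
  have "J v + ereal \<epsilon> \<le> J v + ereal \<epsilon>'" for v using assms by (intro add_left_mono) simp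
  then show ?thesis unfolding eps_subdiff_def by (auto intro: order_trans)
qed

lemma subdiff_subset_eps_subdiff: "0 \<le> \<epsilon> \<Longrightarrow> subdiff J x \<subseteq> eps_subdiff J \<epsilon> x"
  unfolding subdiff_def eps_subdiff_def by (force intro: order_trans add_increasing2)

lemma eps_subdiff_midpoint:
  assumes "\<xi>\<^sub>1 \<in> eps_subdiff J \<epsilon> x" "\<xi>\<^sub>2 \<in> eps_subdiff J \<epsilon> x"
  shows "(1/2) *\<^sub>R (\<xi>\<^sub>1 + \<xi>\<^sub>2) \<in> eps_subdiff J \<epsilon> x"
  unfolding eps_subdiff_def
proof (intro CollectI allI)
  fix v
  have "J x + ereal (\<xi>\<^sub>1 \<bullet> (v - x)) \<le> J v + ereal \<epsilon>" "J x + ereal (\<xi>\<^sub>2 \<bullet> (v - x)) \<le> J v + ereal \<epsilon>"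
    using assms unfolding eps_subdiff_def by auto
  moreover have "(1/2) *\<^sub>R (\<xi>\<^sub>1 + \<xi>\<^sub>2) \<bullet> (v - x) = (\<xi>\<^sub>1 \<bullet> (v - x) + \<xi>\<^sub>2 \<bullet> (v - x)) / 2"
    by (simp add: inner_add_left)
  ultimately show "J x + ereal ((1/2) *\<^sub>R (\<xi>\<^sub>1 + \<xi>\<^sub>2) \<bullet> (v - x)) \<le> J v + ereal \<epsilon>"
    by (cases "J x"; cases "J v") (auto simp: field_simps)
qed

lemma subdiff_if_eps_subdiff_limit:
  assumes "\<And>n. y n \<in> eps_subdiff J (e n) x" "e \<longlonglongrightarrow> 0" "y \<longlonglongrightarrow> \<xi>"
  shows "\<xi> \<in> subdiff J x"
  unfolding subdiff_def
proof (intro CollectI allI)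
  fix v
  have le: "J x + ereal (y n \<bullet> (v - x)) \<le> J v + ereal (e n)" for n
    using assms(1) unfolding eps_subdiff_def by auto
  show "J x + ereal (\<xi> \<bullet> (v - x)) \<le> J v"
  proof (cases "J x"; cases "J v")
    fix r s assume rs: "J x = ereal r" "J v = ereal s"
    have "r + \<xi> \<bullet> (v - x) \<le> s + 0"
    proof (rule LIMSEQ_le)
      show "(\<lambda>n. r + y n \<bullet> (v - x)) \<longlonglongrightarrow> r + \<xi> \<bullet> (v - x)" by (intro tendsto_intros assms(3))
      show "(\<lambda>n. s + e n) \<longlonglongrightarrow> s + 0" by (intro tendsto_intros assms(2))
      show "\<exists>N. \<forall>n\<ge>N. r + y n \<bullet> (v - x) \<le> s + e n" using le rs by auto
    qed
    then show ?thesis using rs by simp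
  qed (use le[of 0] in auto)
qed

lemma Cauchy_minimizing_sequence:
  fixes E :: "nat \<Rightarrow> 'a::real_inner set"
  assumes decreasing: "\<And>m n. m \<le> n \<Longrightarrow> E n \<subseteq> E m"
    and midpoint: "\<And>n x y. x \<in> E n \<Longrightarrow> y \<in> E n \<Longrightarrow> (1/2) *\<^sub>R (x + y) \<in> E n"
    and bounded: "\<And>n. \<exists>z\<in>E n. norm z ^ 2 \<le> M"
  obtains y where "\<And>n. y n \<in> E n" "\<And>n. norm (y n) ^ 2 < M + 1 / Suc n" "Cauchy y"
proof -
  define d where "d n = Inf ((\<lambda>z. norm z ^ 2) ` E n)" for n
  have bdd: "bdd_below ((\<lambda>z. norm z ^ 2) ` E n)" for n by (rule bdd_belowI[of _ 0]) auto
  have d_le: "d n \<le> norm z ^ 2" if "z \<in> E n" for n z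
    unfolding d_def using bdd that by (simp add: cInf_lower)
  have d_le_M: "d n \<le> M" for n using bounded[of n] d_le by fastforce
  have "incseq d" unfolding incseq_def d_def
    using bounded decreasing by (intro allI impI cInf_superset_mono bdd image_mono) blast+
  then obtain d_lim where "d \<longlonglongrightarrow> d_lim" using incseq_convergent d_le_M by blast
  then have "Cauchy d" by (rule LIMSEQ_imp_Cauchy)
  have "\<exists>y. y \<in> E n \<and> norm y ^ 2 < d n + 1 / Suc n" for n
    using cInf_lessD[of "(\<lambda>z. norm z ^ 2) ` E n" "d n + 1 / Suc n"] bounded[of n]
    unfolding d_def by fastforce
  then obtain y where y: "\<And>n. y n \<in> E n" "\<And>n. norm (y n) ^ 2 < d n + 1 / Suc n" by metis
  have dist_y: "norm (y m - y n) ^ 2 \<le> 2 * \<bar>d m - d n\<bar> + 2 * (1 / Suc m) + 2 * (1 / Suc n)" for m n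
  proof -
    have "norm (y m - y n) ^ 2 \<le> 2 * \<bar>d m - d n\<bar> + 2 * (1 / Suc m) + 2 * (1 / Suc n)"
      if ik: "i \<le> k" and mn: "{i, k} = {m, n}" for i k
    proof -
      have "(1/2) *\<^sub>R (y i + y k) \<in> E i" using midpoint y(1) decreasing[OF ik] by blast
      then have "d i \<le> norm ((1/2) *\<^sub>R (y i + y k)) ^ 2" by (rule d_le)
      moreover have "norm (y m - y n) = norm (y i - y k)"
        using mn by (metis doubleton_eq_iff norm_minus_commute)
      moreover have "d k - d i \<le> \<bar>d m - d n\<bar>" "1 / Suc i + 1 / Suc k = 1 / Suc m + 1 / Suc n"
        using mn by (auto simp: doubleton_eq_iff)
      ultimately show ?thesis
        using parallelogram_midpoint[of "y i" "y k"] y(2)[of i] y(2)[of k] by simp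
    qed
    from this[of m n] this[of n m] show ?thesis by (cases "m \<le> n") (auto simp: insert_commute)
  qed
  have "Cauchy y" by (rule Cauchy_if_sq_dist_le[OF \<open>Cauchy d\<close> dist_y])
  moreover have "norm (y n) ^ 2 < M + 1 / Suc n" for n using y(2)[of n] d_le_M[of n] by simp
  ultimately show ?thesis using that y(1) by blast
qed

text \<open>Otherwise midpoints of \<open>\<zeta>\<close> with far away small \<open>\<epsilon>\<close>-subgradients form, by the
  parallelogram law, a Cauchy sequence whose limit is a subgradient shorter than \<open>\<zeta>\<close>.\<close>

lemma min_norm_subgradient_stable:
  fixes J :: "'a::{real_inner, complete_space} \<Rightarrow> ereal"
  assumes min: "min_norm_elem \<zeta> (subdiff J x)" and "\<eta> > 0"
  shows "\<exists>\<epsilon>>0. \<forall>\<xi>\<in>eps_subdiff J \<epsilon> x. norm \<xi> \<le> norm \<zeta> \<longrightarrow> norm (\<xi> - \<zeta>) < \<eta>"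
proof (rule ccontr)
  assume far: "\<not> ?thesis"
  have \<zeta>: "\<zeta> \<in> subdiff J x" using min by (simp add: min_norm_elem_def)
  define M where "M = norm \<zeta> ^ 2 - \<eta> ^ 2 / 4"
  define E where "E n = eps_subdiff J (1 / Suc n) x" for n
  have "\<exists>z\<in>E n. norm z ^ 2 \<le> M" for n
  proof -
    have "1 / real (Suc n) > 0" by simp
    with far have "\<exists>\<xi>\<in>E n. norm \<xi> \<le> norm \<zeta> \<and> \<not> norm (\<xi> - \<zeta>) < \<eta>"
      unfolding E_def by blast
    then obtain \<xi> where \<xi>: "\<xi> \<in> E n" "norm \<xi> \<le> norm \<zeta>" "\<eta> \<le> norm (\<xi> - \<zeta>)"
      by (auto simp: not_less)
    have "(1/2) *\<^sub>R (\<xi> + \<zeta>) \<in> E n"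
      using \<xi>(1) \<zeta> subdiff_subset_eps_subdiff[of "1 / Suc n" J x]
      unfolding E_def by (auto intro: eps_subdiff_midpoint)
    moreover have "norm ((1/2) *\<^sub>R (\<xi> + \<zeta>)) ^ 2 \<le> M"
      unfolding M_def using \<xi> \<open>\<eta> > 0\<close> by (intro norm_midpoint_sq_le) auto
    ultimately show ?thesis by blast
  qed
  moreover have "m \<le> n \<Longrightarrow> E n \<subseteq> E m" for m n
    unfolding E_def by (rule eps_subdiff_mono) (simp add: frac_le)
  ultimately obtain y where y: "\<And>n. y n \<in> E n" "\<And>n. norm (y n) ^ 2 < M + 1 / Suc n" "Cauchy y"
    using Cauchy_minimizing_sequence[of E M] eps_subdiff_midpoint unfolding E_def by metis
  then obtain L where L: "y \<longlonglongrightarrow> L" using Cauchy_convergent_iff convergent_def by blast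
  have inv: "(\<lambda>n. 1 / real (Suc n)) \<longlonglongrightarrow> 0"
    using LIMSEQ_inverse_real_of_nat by (simp add: inverse_eq_divide)
  have "L \<in> subdiff J x"
    using y(1) inv L unfolding E_def by (rule subdiff_if_eps_subdiff_limit)
  then have "norm \<zeta> ^ 2 \<le> norm L ^ 2" using min by (intro power_mono) (auto simp: min_norm_elem_def)
  moreover have "norm L ^ 2 \<le> M + 0"
  proof (rule LIMSEQ_le)
    show "(\<lambda>n. norm (y n) ^ 2) \<longlonglongrightarrow> norm L ^ 2" by (intro tendsto_intros L)
    show "(\<lambda>n. M + 1 / real (Suc n)) \<longlonglongrightarrow> M + 0" by (intro tendsto_intros inv)
    show "\<exists>N. \<forall>n\<ge>N. norm (y n) ^ 2 \<le> M + 1 / real (Suc n)" using y(2) less_imp_le by blast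
  qed
  ultimately have "\<eta> ^ 2 / 4 \<le> 0" unfolding M_def by linarith
  then show False using \<open>\<eta> > 0\<close> by simp
qed

lemma powr_supporting_line_slope:
  fixes r s p :: real
  assumes "\<And>c. c > 0 \<Longrightarrow> r + (c - 1) * s \<le> c powr p * r"
  shows "s = p * r"
proof -
  define \<phi> where "\<phi> c = c powr p * r - r - (c - 1) * s" for c
  have "(\<phi> has_real_derivative p * 1 powr (p - 1) * r - 1 * s) (at 1)"
    unfolding \<phi>_def by (intro derivative_eq_intros refl) auto
  moreover have "\<forall>c. \<bar>1 - c\<bar> < 1 \<longrightarrow> \<phi> 1 \<le> \<phi> c"
  proof (intro allI impI)
    fix c :: real assume "\<bar>1 - c\<bar> < 1"
    then have "c > 0" by auto
    from assms[OF this] show "\<phi> 1 \<le> \<phi> c" by (simp add: \<phi>_def)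
  qed
  ultimately have "p * 1 powr (p - 1) * r - 1 * s = 0" by (metis DERIV_local_min zero_less_one)
  then show ?thesis by simp
qed

section \<open>Absolutely \<open>p\<close>-homogeneous convex functionals\<close>

locale homogeneous_convex =
  fixes J :: "'a::real_inner \<Rightarrow> ereal" and p :: real
  assumes convex: "ereal_convex J" and proper: "ereal_proper J"
    and homogeneous: "abs_p_homogeneous p J"
begin

lemma convexD: "0 \<le> t \<Longrightarrow> t \<le> 1 \<Longrightarrow> J (t *\<^sub>R x + (1 - t) *\<^sub>R y) \<le> ereal t * J x + ereal (1 - t) * J y"
  using convex unfolding ereal_convex_def by blast

lemma J_zero [simp]: "J 0 = 0"
  using homogeneous by (simp add: abs_p_homogeneous_def)

lemma J_scaleR: "c \<noteq> 0 \<Longrightarrow> J (c *\<^sub>R x) = ereal (\<bar>c\<bar> powr p) * J x"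
  using homogeneous by (simp add: abs_p_homogeneous_def)

lemma J_scaleR_pos: "c > 0 \<Longrightarrow> J (c *\<^sub>R x) = ereal (c powr p) * J x"
  using J_scaleR[of c x] by simp

lemma J_not_minf [simp]: "J x \<noteq> -\<infinity>"
  using proper by (simp add: ereal_proper_def)

lemma J_nonneg: "0 \<le> J x"
proof -
  have "J ((1/2) *\<^sub>R x + (1 - 1/2) *\<^sub>R (- x)) \<le> ereal (1/2) * J x + ereal (1 - 1/2) * J (- x)"
    by (rule convexD) auto
  moreover have "J (- x) = J x" using J_scaleR[of "-1" x] by simp
  ultimately have "0 \<le> ereal (1/2) * J x + ereal (1/2) * J x" by (simp add: scaleR_minus_right)
  then show ?thesis by (cases "J x") auto
qed

lemma zero_in_subdiff_zero: "0 \<in> subdiff J 0"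
  using J_nonneg by (simp add: subdiff_def zero_ereal_def)

lemma euler_identity:
  assumes "\<zeta> \<in> subdiff J x"
  shows "\<zeta> \<bullet> x = p * real_of_ereal (J x)"
proof (rule powr_supporting_line_slope)
  fix c :: real assume "c > 0"
  then have "J (c *\<^sub>R x) \<noteq> \<infinity>"
    using J_scaleR_pos[of c x] subdiff_imp_finite[OF proper assms] by (cases "J x") auto
  then have "real_of_ereal (J x) + \<zeta> \<bullet> (c *\<^sub>R x - x) \<le> real_of_ereal (J (c *\<^sub>R x))"
    by (rule subgradient_inequality[OF proper assms])
  then show "real_of_ereal (J x) + (c - 1) * (\<zeta> \<bullet> x) \<le> c powr p * real_of_ereal (J x)"
    using J_scaleR_pos[OF \<open>c > 0\<close>, of x] by (simp add: inner_diff_right algebra_simps)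
qed

lemma J_add_null_le:
  assumes "J n = 0"
  shows "J (x + n) \<le> J x"
proof (cases "J x")
  case (real r)
  have bound: "J (x + n) \<le> ereal (t powr (1 - p) * r)" if t: "0 < t" "t < 1" for t
  proof -
    have "x + n = t *\<^sub>R ((1/t) *\<^sub>R x) + (1 - t) *\<^sub>R ((1/(1-t)) *\<^sub>R n)" using t by simp
    then have "J (x + n) \<le> ereal t * J ((1/t) *\<^sub>R x) + ereal (1 - t) * J ((1/(1-t)) *\<^sub>R n)"
      using t by (metis convexD less_eq_real_def)
    also have "\<dots> = ereal (t * (1/t) powr p * r)"
      using J_scaleR_pos[of "1/t" x] J_scaleR_pos[of "1/(1-t)" n] t real assms by simp
    also have "t * (1/t) powr p = t powr (1 - p)"
      using t by (simp add: powr_diff powr_divide)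
    finally show ?thesis by simp
  qed
  then obtain y where y: "J (x + n) = ereal y"
    using bound[of "1/2"] by (cases "J (x + n)") auto
  have "((\<lambda>t. t powr (1 - p) * r) \<longlongrightarrow> 1 powr (1 - p) * r) (at_left 1)"
    by (intro tendsto_intros) auto
  moreover have "\<forall>\<^sub>F t in at_left 1. y \<le> t powr (1 - p) * r"
    unfolding eventually_at_left_field using bound y by (intro exI[of _ 0]) auto
  ultimately have "y \<le> 1 powr (1 - p) * r"
    by (rule tendsto_le[OF trivial_limit_at_left_real _ tendsto_const])
  then show ?thesis using y real by simp
qed auto

lemma J_null_scaleR: "J n = 0 \<Longrightarrow> J (c *\<^sub>R n) = 0"
  using J_scaleR[of c n] by (cases "c = 0") auto

lemma J_add_null:
  assumes "J n = 0"
  shows "J (x + n) = J x"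
proof (rule antisym)
  show "J (x + n) \<le> J x" by (rule J_add_null_le[OF assms])
  have "J ((x + n) + (- 1) *\<^sub>R n) \<le> J (x + n)" by (rule J_add_null_le[OF J_null_scaleR[OF assms]])
  then show "J x \<le> J (x + n)" by simp
qed

lemma subdiff_orthogonal_null:
  assumes "\<zeta> \<in> subdiff J x" "J n = 0"
  shows "\<zeta> \<bullet> n = 0"
proof -
  have "J (x + c *\<^sub>R n) = J x" for c by (rule J_add_null[OF J_null_scaleR[OF assms(2)]])
  then have "real_of_ereal (J x) + \<zeta> \<bullet> ((x + c *\<^sub>R n) - x) \<le> real_of_ereal (J x)" for c
    using subgradient_inequality[OF proper assms(1), of "x + c *\<^sub>R n"]
      subdiff_imp_finite[OF proper assms(1)] by simp
  from this[of 1] this[of "-1"] show ?thesis by simp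
qed

end

section \<open>The gradient flow\<close>

locale brezis_flow = homogeneous_convex J p
  for J :: "'a::{real_inner, complete_space} \<Rightarrow> ereal" and p +
  fixes u :: "real \<Rightarrow> 'a" and f :: 'a
  assumes gradient_flow: "gradient_flow J f u"
begin

definition zeta :: "real \<Rightarrow> 'a" where
  "zeta t = (SOME \<zeta>. min_norm_elem \<zeta> (subdiff J (u t)) \<and> (u has_vector_derivative - \<zeta>) (at t within {t..}))"

lemma zeta_spec: "t > 0 \<Longrightarrow> min_norm_elem (zeta t) (subdiff J (u t)) \<and> (u has_vector_derivative - zeta t) (at t within {t..})"
  unfolding zeta_def by (rule someI_ex) (use gradient_flow in \<open>auto simp: gradient_flow_def\<close>)

lemma zeta_min_norm: "t > 0 \<Longrightarrow> min_norm_elem (zeta t) (subdiff J (u t))"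
  using zeta_spec by blast

lemma zeta_in_subdiff: "t > 0 \<Longrightarrow> zeta t \<in> subdiff J (u t)"
  using zeta_min_norm by (simp add: min_norm_elem_def)

lemma flow_has_vector_derivative: "t > 0 \<Longrightarrow> (u has_vector_derivative - zeta t) (at t within {t..})"
  using zeta_spec by blast

lemma continuous_on_flow: "continuous_on {0..} u"
  using gradient_flow by (simp add: gradient_flow_def)

lemma flow_0: "u 0 = f"
  using gradient_flow by (simp add: gradient_flow_def)

lemma flow_tendsto: "t \<ge> 0 \<Longrightarrow> (u \<longlongrightarrow> u t) (at t within {0..})"
  using continuous_on_flow by (simp add: continuous_on_def)

lemma flow_tendsto_right: "t \<ge> 0 \<Longrightarrow> (u \<longlongrightarrow> u t) (at_right t)"
  by (rule tendsto_within_subset[OF flow_tendsto]) auto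

text \<open>Finite for \<open>t > 0\<close> by \<open>J_flow\<close>; \<open>energy 0\<close> is a junk value when \<open>J f = \<infinity>\<close>.\<close>

definition energy :: "real \<Rightarrow> real" where
  "energy t = real_of_ereal (J (u t))"

lemma J_flow: "t > 0 \<Longrightarrow> J (u t) = ereal (energy t)"
  using subdiff_imp_finite[OF proper zeta_in_subdiff] by (cases "J (u t)") (auto simp: energy_def)

lemma zeta_inner_flow: "t > 0 \<Longrightarrow> zeta t \<bullet> u t = p * energy t"
  unfolding energy_def by (rule euler_identity[OF zeta_in_subdiff])

lemma subgradient_inequality_flow:
  "t > 0 \<Longrightarrow> J v \<noteq> \<infinity> \<Longrightarrow> energy t + zeta t \<bullet> (v - u t) \<le> real_of_ereal (J v)"
  unfolding energy_def by (rule subgradient_inequality[OF proper zeta_in_subdiff])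

lemma energy_subgradient_inequality:
  assumes "t > 0" "s > 0"
  shows "energy t + zeta t \<bullet> (u s - u t) \<le> energy s"
proof -
  have "J (u s) \<noteq> \<infinity>" using J_flow[OF assms(2)] by simp
  from subgradient_inequality_flow[OF assms(1) this] show ?thesis unfolding energy_def .
qed

lemma sqnorm_flow_has_derivative:
  assumes "t > 0"
  shows "((\<lambda>s. u s \<bullet> u s) has_real_derivative - 2 * (p * energy t)) (at t within {t..})"
  using has_real_derivative_inner[OF flow_has_vector_derivative[OF assms] flow_has_vector_derivative[OF assms]]
    zeta_inner_flow[OF assms] by (simp add: inner_commute)

lemma euler_cauchy_schwarz: "t > 0 \<Longrightarrow> (p * energy t) ^ 2 \<le> norm (zeta t) ^ 2 * (u t \<bullet> u t)"
  using Cauchy_Schwarz_ineq[of "zeta t" "u t"] zeta_inner_flow[of t]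
  by (simp add: power2_norm_eq_inner)

lemma norm_flow_antimono:
  assumes "0 \<le> a" "a \<le> b"
  shows "norm (u b) \<le> norm (u a)"
proof -
  have "u b \<bullet> u b \<le> u a \<bullet> u a"
  proof (rule le_if_right_derivative_nonpos[OF assms(2)])
    show "continuous_on {a..b} (\<lambda>s. u s \<bullet> u s)"
      using assms by (intro continuous_intros continuous_on_subset[OF continuous_on_flow]) auto
    fix t assume "a < t" "t < b"
    then have "t > 0" using assms by simp
    show "((\<lambda>s. u s \<bullet> u s) has_real_derivative - 2 * (p * energy t)) (at t within {t..})"
      by (rule sqnorm_flow_has_derivative[OF \<open>t > 0\<close>])
    have "(zeta t - 0) \<bullet> (u t - 0) \<ge> 0"
      using subdiff_monotone[OF proper zeta_in_subdiff[OF \<open>t > 0\<close>] zero_in_subdiff_zero] .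
    then show "- 2 * (p * energy t) \<le> 0" using zeta_inner_flow[OF \<open>t > 0\<close>] by simp
  qed
  then show ?thesis by (simp add: norm_le)
qed

lemma flow_inner_null_const:
  assumes "J n = 0" "s \<ge> 0"
  shows "u s \<bullet> n = f \<bullet> n"
proof -
  have "c * (u s \<bullet> n) \<le> c * (u 0 \<bullet> n)" for c
  proof (rule le_if_right_derivative_nonpos[OF assms(2)])
    show "continuous_on {0..s} (\<lambda>r. c * (u r \<bullet> n))"
      by (intro continuous_intros continuous_on_subset[OF continuous_on_flow]) auto
    fix t :: real assume "0 < t"
    have "((\<lambda>r. u r \<bullet> n) has_real_derivative u t \<bullet> 0 + - zeta t \<bullet> n) (at t within {t..})"
      using has_real_derivative_inner[OF flow_has_vector_derivative[OF \<open>0 < t\<close>]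
          has_vector_derivative_const] .
    moreover have "zeta t \<bullet> n = 0"
      using subdiff_orthogonal_null[OF zeta_in_subdiff[OF \<open>0 < t\<close>] assms(1)] .
    ultimately have "((\<lambda>r. u r \<bullet> n) has_real_derivative 0) (at t within {t..})" by simp
    from DERIV_cmult[OF this, of c]
    show "((\<lambda>r. c * (u r \<bullet> n)) has_real_derivative 0) (at t within {t..})" by simp
  qed simp
  from this[of 1] this[of "-1"] show ?thesis using flow_0 by simp
qed

lemma flow_in_H0:
  assumes "f \<in> H0 J" "s \<ge> 0" "u s \<noteq> 0"
  shows "u s \<in> H0 J"
  using assms flow_inner_null_const by (simp add: H0_def null_set_def)

lemma rayleigh_quotient_ge_lambda1:
  assumes "f \<in> H0 J" "s > 0" "u s \<noteq> 0"
  shows "lambda1 p J \<le> ereal (p * energy s / norm (u s) powr p)"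
proof -
  have "lambda1 p J \<le> ereal p * J (u s) / ereal (norm (u s) powr p)"
    unfolding lambda1_def using assms by (intro INF_lower flow_in_H0) auto
  also have "\<dots> = ereal (p * energy s / norm (u s) powr p)"
    using J_flow[OF assms(2)] assms(3) by simp
  finally show ?thesis .
qed

lemma shifted_flow_has_vector_derivative:
  assumes "t + h > 0"
  shows "((\<lambda>s. u (s + h)) has_vector_derivative - zeta (t + h)) (at t within {t..})"
proof -
  have "((\<lambda>s. s + h) has_vector_derivative 1) (at t within {t..})"
    by (auto intro!: derivative_eq_intros simp: has_real_derivative_iff_has_vector_derivative[symmetric])
  moreover have "(\<lambda>s. s + h) ` {t..} = {t + h..}" by (auto simp: image_iff intro!: bexI[of _ "_ - h"])
  then have "(u has_vector_derivative - zeta (t + h)) (at (t + h) within (\<lambda>s. s + h) ` {t..})"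
    using flow_has_vector_derivative[OF assms] by simp
  ultimately have "(u \<circ> (\<lambda>s. s + h) has_vector_derivative 1 *\<^sub>R - zeta (t + h)) (at t within {t..})"
    by (rule vector_diff_chain_within)
  then show ?thesis by (simp add: o_def)
qed

text \<open>The time shift of \<open>u\<close> is again a trajectory, and since \<open>\<partial>J\<close> is monotone any two
  trajectories approach each other.\<close>

lemma flow_contraction:
  assumes "h \<ge> 0" "0 \<le> a" "a \<le> b"
  shows "norm (u (b + h) - u b) \<le> norm (u (a + h) - u a)"
proof -
  define g where "g s = (u (s + h) - u s) \<bullet> (u (s + h) - u s)" for s
  have "g b \<le> g a"
  proof (rule le_if_right_derivative_nonpos[OF assms(3)])
    have "continuous_on {a..b} (\<lambda>s. u (s + h))"
      by (rule continuous_on_compose2[OF continuous_on_flow, of _ "\<lambda>s. s + h"])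
        (use assms in \<open>auto intro!: continuous_intros\<close>)
    then show "continuous_on {a..b} g" unfolding g_def
      using assms by (intro continuous_intros continuous_on_subset[OF continuous_on_flow]) auto
    fix t assume "a < t" "t < b"
    then have t: "t > 0" "t + h > 0" using assms by auto
    have "((\<lambda>s. u (s + h) - u s) has_vector_derivative - zeta (t + h) - - zeta t) (at t within {t..})"
      by (intro has_vector_derivative_diff shifted_flow_has_vector_derivative flow_has_vector_derivative t)
    from has_real_derivative_inner[OF this this]
    have "(g has_real_derivative 2 * ((u (t + h) - u t) \<bullet> (- zeta (t + h) - - zeta t))) (at t within {t..})"
      unfolding g_def by (simp add: inner_commute)
    then show "(g has_real_derivative - 2 * ((zeta (t + h) - zeta t) \<bullet> (u (t + h) - u t))) (at t within {t..})"
      by (simp add: inner_commute inner_diff_left inner_diff_right)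
    show "- 2 * ((zeta (t + h) - zeta t) \<bullet> (u (t + h) - u t)) \<le> 0"
      using subdiff_monotone[OF proper zeta_in_subdiff zeta_in_subdiff] t by simp
  qed
  then show ?thesis unfolding g_def by (simp add: norm_le)
qed

lemma norm_difference_quotient_tendsto:
  assumes "a > 0"
  shows "((\<lambda>h. norm (inverse h *\<^sub>R (u (a + h) - u a))) \<longlongrightarrow> norm (zeta a)) (at_right 0)"
proof -
  have "filterlim (\<lambda>h. a + h) (at a within {a..}) (at_right 0)"
  proof (rule filterlim_at_withinI)
    show "filterlim (\<lambda>h. a + h) (nhds a) (at_right 0)"
      by (rule tendsto_within_subset[of _ _ _ UNIV]) (auto intro!: tendsto_eq_intros)
    show "\<forall>\<^sub>F h in at_right 0. a + h \<in> {a..} - {a}"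
      by (simp add: eventually_at_right_field) (auto intro: exI[of _ 1])
  qed
  from filterlim_compose[OF has_vector_derivative_imp_difference_quotient[OF
        flow_has_vector_derivative[OF assms]] this]
  have "((\<lambda>h. inverse h *\<^sub>R (u (a + h) - u a)) \<longlongrightarrow> - zeta a) (at_right 0)" by (simp add: o_def)
  from tendsto_norm[OF this] show ?thesis by simp
qed

lemma norm_zeta_antimono:
  assumes "0 < a" "a \<le> b"
  shows "norm (zeta b) \<le> norm (zeta a)"
proof (rule tendsto_le[OF trivial_limit_at_right_real
      norm_difference_quotient_tendsto norm_difference_quotient_tendsto])
  show "a > 0" "b > 0" using assms by auto
  show "\<forall>\<^sub>F h in at_right 0. norm (inverse h *\<^sub>R (u (b + h) - u b)) \<le> norm (inverse h *\<^sub>R (u (a + h) - u a))"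
    unfolding eventually_at_right_field
  proof (intro exI[of _ 1] conjI allI impI)
    fix h :: real assume h: "0 < h" "h < 1"
    have "norm (u (b + h) - u b) \<le> norm (u (a + h) - u a)"
      using assms h by (intro flow_contraction) auto
    then show "norm (inverse h *\<^sub>R (u (b + h) - u b)) \<le> norm (inverse h *\<^sub>R (u (a + h) - u a))"
      using h by (simp add: mult_left_mono)
  qed simp
qed

lemma zeta_in_eps_subdiff:
  assumes "t > 0" "s > 0" "norm (zeta s) \<le> norm (zeta t)"
  shows "zeta s \<in> eps_subdiff J (2 * norm (zeta t) * norm (u s - u t)) (u t)"
  unfolding eps_subdiff_def
proof (intro CollectI allI)
  fix v
  show "J (u t) + ereal (zeta s \<bullet> (v - u t)) \<le> J v + ereal (2 * norm (zeta t) * norm (u s - u t))"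
  proof (cases "J v")
    case (real jv)
    have "energy s + zeta s \<bullet> (v - u s) \<le> jv"
      using subgradient_inequality_flow[OF assms(2), of v] real by simp
    moreover have "energy t + zeta t \<bullet> (u s - u t) \<le> energy s"
      by (rule energy_subgradient_inequality[OF assms(1,2)])
    moreover have "- (zeta t \<bullet> (u s - u t)) \<le> norm (zeta t) * norm (u s - u t)"
      using norm_cauchy_schwarz[of "zeta t" "u t - u s"] by (simp add: norm_minus_commute inner_diff_right)
    moreover have "zeta s \<bullet> (u s - u t) \<le> norm (zeta t) * norm (u s - u t)"
      using norm_cauchy_schwarz[of "zeta s" "u s - u t"]
        mult_right_mono[OF assms(3) norm_ge_zero[of "u s - u t"]]
      by linarith
    ultimately show ?thesis
      using J_flow[OF assms(1)] real by (simp add: inner_diff_right)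
  qed auto
qed

lemma zeta_tendsto_right:
  assumes "t > 0"
  shows "(zeta \<longlongrightarrow> zeta t) (at_right t)"
proof (rule tendstoI)
  fix \<eta> :: real assume "\<eta> > 0"
  obtain \<epsilon> where "\<epsilon> > 0"
    and close: "\<And>\<xi>. \<xi> \<in> eps_subdiff J \<epsilon> (u t) \<Longrightarrow> norm \<xi> \<le> norm (zeta t) \<Longrightarrow> norm (\<xi> - zeta t) < \<eta>"
    using min_norm_subgradient_stable[OF zeta_min_norm[OF assms] \<open>\<eta> > 0\<close>] by blast
  have "((\<lambda>s. 2 * norm (zeta t) * norm (u s - u t)) \<longlongrightarrow> 2 * norm (zeta t) * norm (u t - u t)) (at_right t)"
    using assms by (intro tendsto_intros flow_tendsto_right) auto
  then have "\<forall>\<^sub>F s in at_right t. 2 * norm (zeta t) * norm (u s - u t) < \<epsilon>"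
    using \<open>\<epsilon> > 0\<close> by (intro order_tendstoD) auto
  moreover have "\<forall>\<^sub>F s in at_right t. s > t" by (simp add: eventually_at_filter)
  ultimately show "\<forall>\<^sub>F s in at_right t. dist (zeta s) (zeta t) < \<eta>"
  proof eventually_elim
    case (elim s)
    then have "s > 0" "norm (zeta s) \<le> norm (zeta t)" using assms norm_zeta_antimono by auto
    then have "zeta s \<in> eps_subdiff J (2 * norm (zeta t) * norm (u s - u t)) (u t)"
      using zeta_in_eps_subdiff assms by blast
    then have "zeta s \<in> eps_subdiff J \<epsilon> (u t)"
      using eps_subdiff_mono[of _ \<epsilon>] elim by (blast dest: less_imp_le)
    then show ?case using close \<open>norm (zeta s) \<le> norm (zeta t)\<close> by (simp add: dist_norm)
  qed
qed

lemma energy_lipschitz: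
  assumes "0 < a" "a \<le> s" "a \<le> t"
  shows "\<bar>energy s - energy t\<bar> \<le> norm (zeta a) * norm (u s - u t)"
proof -
  have bound: "\<bar>zeta r \<bullet> (u s - u t)\<bar> \<le> norm (zeta a) * norm (u s - u t)" if "a \<le> r" for r
    using Cauchy_Schwarz_ineq2[of "zeta r" "u s - u t"]
      mult_right_mono[OF norm_zeta_antimono[OF assms(1) that] norm_ge_zero[of "u s - u t"]]
    by linarith
  have swap: "zeta r \<bullet> (u t - u s) = - (zeta r \<bullet> (u s - u t))" for r
    by (simp add: inner_diff_right)
  have "energy s - energy t \<le> zeta s \<bullet> (u s - u t)"
    using energy_subgradient_inequality[of s t] swap[of s] assms by simp
  moreover have "energy t - energy s \<le> - (zeta t \<bullet> (u s - u t))"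
    using energy_subgradient_inequality[of t s] assms by simp
  ultimately show ?thesis
    using bound[OF assms(2)] bound[OF assms(3)] unfolding abs_le_iff by linarith
qed

lemma continuous_on_energy:
  assumes "0 < a"
  shows "continuous_on {a..b} energy"
  unfolding continuous_on_def
proof
  fix x assume x: "x \<in> {a..b}"
  have "(u \<longlongrightarrow> u x) (at x within {a..b})"
    using x assms by (intro tendsto_within_subset[OF flow_tendsto]) auto
  then have "((\<lambda>s. u s - u x) \<longlongrightarrow> 0) (at x within {a..b})" by (rule LIM_zero)
  moreover have "\<forall>\<^sub>F s in at x within {a..b}. norm (energy s - energy x) \<le> norm (u s - u x) * norm (zeta a)"
    unfolding eventually_at_filter
    using energy_lipschitz[OF assms] x by (intro always_eventually) (auto simp: mult.commute)
  ultimately have "((\<lambda>s. energy s - energy x) \<longlongrightarrow> 0) (at x within {a..b})"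
    by (rule tendsto_0_le)
  then show "(energy \<longlongrightarrow> energy x) (at x within {a..b})" by (simp add: LIM_zero_iff)
qed

lemma energy_le_tangent: "t > 0 \<Longrightarrow> s > 0 \<Longrightarrow> energy s \<le> energy t + zeta s \<bullet> (u s - u t)"
  using energy_subgradient_inequality[of s t] by (simp add: inner_diff_right)

lemma tangent_has_derivative:
  assumes "t > 0"
  shows "((\<lambda>s. energy t + zeta s \<bullet> (u s - u t)) has_real_derivative - (norm (zeta t) ^ 2)) (at t within {t..})"
  unfolding has_field_derivative_iff
proof -
  have "((\<lambda>s. zeta s \<bullet> (inverse (s - t) *\<^sub>R (u s - u t))) \<longlongrightarrow> zeta t \<bullet> - zeta t) (at t within {t..})"
    using zeta_tendsto_right[OF assms]
      has_vector_derivative_imp_difference_quotient[OF flow_has_vector_derivative[OF assms]]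
    by (intro tendsto_intros) (auto simp: at_within_Ici_at_right)
  moreover have "(\<lambda>s. (energy t + zeta s \<bullet> (u s - u t) - (energy t + zeta t \<bullet> (u t - u t))) / (s - t))
      = (\<lambda>s. zeta s \<bullet> (inverse (s - t) *\<^sub>R (u s - u t)))"
    by (simp add: fun_eq_iff divide_inverse mult.commute)
  ultimately show "((\<lambda>s. (energy t + zeta s \<bullet> (u s - u t) - (energy t + zeta t \<bullet> (u t - u t))) / (s - t))
      \<longlongrightarrow> - (norm (zeta t) ^ 2)) (at t within {t..})"
    by (simp add: power2_norm_eq_inner)
qed

lemma extinction_time:
  assumes "\<exists>T>0. \<forall>s\<ge>T. u s = 0" "f \<noteq> 0"
  shows "extinction_time u > 0" "\<And>s. s \<ge> extinction_time u \<Longrightarrow> u s = 0"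
    "\<And>s. 0 \<le> s \<Longrightarrow> s < extinction_time u \<Longrightarrow> u s \<noteq> 0"
proof -
  define S where "S = {T. T > 0 \<and> (\<forall>t\<ge>T. u t = 0)}"
  have T: "extinction_time u = Inf S" unfolding S_def extinction_time_def ..
  have "S \<noteq> {}" using assms(1) unfolding S_def by auto
  have bdd: "bdd_below S" unfolding S_def by (rule bdd_belowI[of _ 0]) auto
  have T_nonneg: "extinction_time u \<ge> 0"
    unfolding T using \<open>S \<noteq> {}\<close> by (rule cInf_greatest) (auto simp: S_def)
  have after: "u s = 0" if s: "s > extinction_time u" for s
  proof -
    obtain T' where "T' \<in> S" "T' < s" using cInf_lessD[OF \<open>S \<noteq> {}\<close>, of s] s unfolding T by blast
    then show ?thesis unfolding S_def by auto
  qed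
  have "\<forall>\<^sub>F s in at_right (extinction_time u). u s = 0"
    using after by (auto simp: eventually_at_filter)
  with flow_tendsto_right[OF T_nonneg]
  have "((\<lambda>s. 0) \<longlongrightarrow> u (extinction_time u)) (at_right (extinction_time u))"
    by (rule Lim_transform_eventually)
  then have at_T: "u (extinction_time u) = 0"
    using tendsto_const_iff[OF trivial_limit_at_right_real] by metis
  show "u s = 0" if "s \<ge> extinction_time u" for s
    using after at_T that by (cases "s = extinction_time u") auto
  show "extinction_time u > 0"
    using T_nonneg at_T flow_0 assms(2) by (cases "extinction_time u = 0") auto
  show "u s \<noteq> 0" if s: "0 \<le> s" "s < extinction_time u" for s
  proof
    assume "u s = 0"
    then have "s > 0" using flow_0 assms(2) s by (cases "s = 0") auto
    moreover have "u t = 0" if "t \<ge> s" for t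
      using norm_flow_antimono[of s t] \<open>u s = 0\<close> s that by simp
    ultimately have "s \<in> S" unfolding S_def by blast
    then show False using cInf_lower[OF \<open>s \<in> S\<close> bdd] s unfolding T by simp
  qed
qed

end

section \<open>The rescaled flow near extinction\<close>

locale extinction_profile = brezis_flow J p u f
  for J :: "'a::{real_inner, complete_space} \<Rightarrow> ereal" and p u f +
  fixes T \<mu> :: real
  assumes p_ge_1: "1 \<le> p" and p_less_2: "p < 2"
    and T_pos: "T > 0"
    and flow_vanishes: "\<And>s. s \<ge> T \<Longrightarrow> u s = 0"
    and flow_nonzero: "\<And>s. 0 \<le> s \<Longrightarrow> s < T \<Longrightarrow> u s \<noteq> 0"
    and mu_pos: "\<mu> > 0"
    and rayleigh_lower_bound: "\<And>s. 0 < s \<Longrightarrow> s < T \<Longrightarrow> \<mu> * norm (u s) powr p \<le> p * energy s"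
begin

definition q :: real where "q = 2 - p"

definition sqnorm :: "real \<Rightarrow> real" where "sqnorm s = u s \<bullet> u s"

definition rayleigh :: "real \<Rightarrow> real" where "rayleigh s = p * energy s * sqnorm s powr (- p / 2)"

definition phi :: "real \<Rightarrow> real" where "phi s = sqnorm s powr (q / 2)"

definition psi :: "real \<Rightarrow> real" where "psi s = phi s / (T - s)"

lemma q_pos: "q > 0"
  using p_less_2 by (simp add: q_def)

lemma sqnorm_pos: "0 \<le> s \<Longrightarrow> s < T \<Longrightarrow> sqnorm s > 0"
  using flow_nonzero[of s] by (simp add: sqnorm_def)

lemma sqnorm_powr: "sqnorm s powr r = norm (u s) powr (2 * r)"
proof (cases "u s = 0")
  case False
  then have "sqnorm s = norm (u s) powr 2"
    by (simp add: sqnorm_def power2_norm_eq_inner[symmetric] powr_realpow[of _ 2, simplified])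
  then show ?thesis by (simp only: powr_powr)
qed (simp add: sqnorm_def)

lemma continuous_on_sqnorm: "0 \<le> a \<Longrightarrow> continuous_on {a..b} sqnorm"
  unfolding sqnorm_def by (intro continuous_intros continuous_on_subset[OF continuous_on_flow]) auto

lemma sqnorm_powr_has_derivative:
  assumes "0 < t" "t < T"
  shows "((\<lambda>s. sqnorm s powr r) has_real_derivative r * sqnorm t powr (r - 1) * (- 2 * (p * energy t)))
    (at t within {t..})"
  using sqnorm_flow_has_derivative[OF assms(1)] sqnorm_pos[of t] assms unfolding sqnorm_def[abs_def]
  by (intro DERIV_chain2[OF has_real_derivative_powr]) auto

lemma rayleigh_ge_mu:
  assumes "0 < s" "s < T"
  shows "\<mu> \<le> rayleigh s"
proof -
  have pos: "norm (u s) > 0" using flow_nonzero[of s] assms by auto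
  have "\<mu> = \<mu> * norm (u s) powr p * norm (u s) powr (- p)"
    using pos by (simp add: powr_minus field_simps)
  also have "\<dots> \<le> p * energy s * norm (u s) powr (- p)"
    by (rule mult_right_mono[OF rayleigh_lower_bound[OF assms]]) simp
  also have "\<dots> = rayleigh s" unfolding rayleigh_def sqnorm_powr by simp
  finally show ?thesis .
qed

lemma continuous_on_rayleigh:
  assumes "0 < a" "b < T"
  shows "continuous_on {a..b} rayleigh"
proof -
  have "sqnorm s \<noteq> 0" if "s \<in> {a..b}" for s
    using sqnorm_pos[of s] that assms by simp
  then show ?thesis unfolding rayleigh_def
    using assms by (intro continuous_intros continuous_on_energy continuous_on_sqnorm) auto
qed

text \<open>The Rayleigh quotient need not be differentiable, but at each time it is touched from
  above by the function obtained by replacing the energy with its upper bound from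
  \<open>energy_le_tangent\<close>; the derivative of that function is \<open>\<le> 0\<close> by
  \<open>euler_cauchy_schwarz\<close>.\<close>

lemma rayleigh_right_dini_nonpos:
  assumes t: "0 < t" "t < T"
  shows "right_dini_nonpos rayleigh t"
proof -
  define c where "c = sqnorm t powr (- p / 2 - 1)"
  have "sqnorm t > 0" using sqnorm_pos t by simp
  have "sqnorm t powr (- p / 2) = sqnorm t powr ((- p / 2 - 1) + 1)" by simp
  also have "\<dots> = c * sqnorm t" using \<open>sqnorm t > 0\<close> by (simp only: powr_add c_def) simp
  finally have c: "c > 0" "sqnorm t powr (- p / 2) = c * sqnorm t"
    using \<open>sqnorm t > 0\<close> by (auto simp: c_def)
  define G where "G = (\<lambda>s. p * ((energy t + zeta s \<bullet> (u s - u t)) * sqnorm s powr (- p / 2)))"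
  have "(G has_real_derivative p * ((energy t + zeta t \<bullet> (u t - u t))
      * (- p / 2 * sqnorm t powr (- p / 2 - 1) * (- 2 * (p * energy t)))
      + - (norm (zeta t) ^ 2) * sqnorm t powr (- p / 2))) (at t within {t..})"
    unfolding G_def
    by (intro DERIV_cmult DERIV_mult' tangent_has_derivative sqnorm_powr_has_derivative t)
  then have "(G has_real_derivative p * c * ((p * energy t) ^ 2 - norm (zeta t) ^ 2 * sqnorm t))
      (at t within {t..})"
    by (rule DERIV_cong) (unfold c(2) c_def[symmetric], simp add: algebra_simps power2_eq_square)
  moreover have "p * c * ((p * energy t) ^ 2 - norm (zeta t) ^ 2 * sqnorm t) \<le> 0"
    using euler_cauchy_schwarz[OF t(1)] c(1) p_ge_1 unfolding sqnorm_def
    by (intro mult_nonneg_nonpos) auto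
  moreover have "\<forall>\<^sub>F s in at_right t. rayleigh s \<le> G s"
    unfolding eventually_at_filter
  proof (intro always_eventually allI impI)
    fix s assume "s \<noteq> t" "s \<in> {t<..}"
    then have "energy s \<le> energy t + zeta s \<bullet> (u s - u t)" using t by (intro energy_le_tangent) auto
    then show "rayleigh s \<le> G s" unfolding rayleigh_def G_def
      using p_ge_1 by (simp add: mult_right_mono mult.assoc)
  qed
  ultimately show ?thesis
    by (intro right_dini_nonpos_if_majorant[where G = G]) (auto simp: rayleigh_def G_def)
qed

lemma rayleigh_antimono:
  assumes "0 < a" "a \<le> b" "b < T"
  shows "rayleigh b \<le> rayleigh a"
  using assms
  by (intro le_if_right_dini_nonpos[OF assms(2)] continuous_on_rayleigh rayleigh_right_dini_nonpos) auto

lemma phi_has_derivative: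
  assumes "0 < t" "t < T"
  shows "(phi has_real_derivative - q * rayleigh t) (at t within {t..})"
proof -
  have "q / 2 - 1 = - p / 2" by (simp add: q_def field_simps)
  with sqnorm_powr_has_derivative[OF assms, of "q / 2"] show ?thesis
    unfolding phi_def[abs_def] rayleigh_def by (simp add: algebra_simps)
qed

lemma continuous_on_phi: "0 \<le> a \<Longrightarrow> continuous_on {a..b} phi"
  unfolding phi_def using q_pos
  by (intro continuous_on_powr' continuous_on_sqnorm continuous_intros) (auto simp: sqnorm_def)

lemma phi_T: "phi T = 0"
  unfolding phi_def sqnorm_def using flow_vanishes[of T] q_pos by simp

lemma phi_eq: "phi s = norm (u s) powr q"
  unfolding phi_def sqnorm_powr by simp

lemma phi_lower_bound:
  assumes "0 < s" "s < T" and c: "\<And>r. s \<le> r \<Longrightarrow> r < T \<Longrightarrow> c \<le> rayleigh r"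
  shows "q * c * (T - s) \<le> phi s"
proof -
  have "phi T + q * c * T \<le> phi s + q * c * s"
  proof (rule le_if_right_derivative_nonpos[where g = "\<lambda>r. phi r + q * c * r"])
    show "continuous_on {s..T} (\<lambda>r. phi r + q * c * r)"
      using assms by (intro continuous_intros continuous_on_phi) auto
    fix r assume "s < r" "r < T"
    with assms show "((\<lambda>r. phi r + q * c * r) has_real_derivative - q * rayleigh r + q * c * 1) (at r within {r..})"
      by (intro derivative_intros phi_has_derivative) auto
    show "- q * rayleigh r + q * c * 1 \<le> 0"
      using c[of r] \<open>s < r\<close> \<open>r < T\<close> q_pos by (simp add: algebra_simps mult_left_mono)
  qed (use assms in auto)
  then show ?thesis using phi_T by (simp add: algebra_simps)
qed

lemma phi_upper_bound:
  assumes "0 < s" "s < T"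
  shows "phi s \<le> q * rayleigh s * (T - s)"
proof -
  have "- phi T - q * rayleigh s * T \<le> - phi s - q * rayleigh s * s"
  proof (rule le_if_right_derivative_nonpos[where g = "\<lambda>r. - phi r - q * rayleigh s * r"])
    show "continuous_on {s..T} (\<lambda>r. - phi r - q * rayleigh s * r)"
      using assms by (intro continuous_intros continuous_on_phi) auto
    fix r assume "s < r" "r < T"
    with assms show "((\<lambda>r. - phi r - q * rayleigh s * r) has_real_derivative
        - (- q * rayleigh r) - q * rayleigh s * 1) (at r within {r..})"
      by (intro derivative_intros phi_has_derivative) auto
    show "- (- q * rayleigh r) - q * rayleigh s * 1 \<le> 0"
      using rayleigh_antimono[of s r] \<open>s < r\<close> \<open>r < T\<close> assms q_pos
      by (simp add: algebra_simps mult_left_mono)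
  qed (use assms in auto)
  then show ?thesis using phi_T by (simp add: algebra_simps)
qed

lemma psi_antimono:
  assumes "0 \<le> a" "a \<le> b" "b < T"
  shows "psi b \<le> psi a"
proof (rule le_if_right_derivative_nonpos[OF assms(2)])
  show "continuous_on {a..b} psi" unfolding psi_def
    using assms by (intro continuous_intros continuous_on_phi) auto
  fix r assume r: "a < r" "r < b"
  with assms show "(psi has_real_derivative ((- q * rayleigh r) * (T - r) - phi r * (0 - 1)) / ((T - r) * (T - r)))
      (at r within {r..})"
    unfolding psi_def[abs_def] by (intro derivative_intros phi_has_derivative) auto
  show "((- q * rayleigh r) * (T - r) - phi r * (0 - 1)) / ((T - r) * (T - r)) \<le> 0"
  proof (rule divide_nonpos_nonneg)
    show "(- q * rayleigh r) * (T - r) - phi r * (0 - 1) \<le> 0"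
      using phi_upper_bound[of r] r assms by (simp add: algebra_simps)
  qed simp
qed

definition lam :: real where "lam = 1 / (q * T)"

definition a :: "real \<Rightarrow> real" where "a s = (1 - s / T) powr (1 / q)"

definition w :: "real \<Rightarrow> 'a" where "w s = u s /\<^sub>R a s"

definition energy_w :: "real \<Rightarrow> real" where "energy_w s = energy s / a s powr p"

lemma lam_q_T: "lam * q * T = 1"
  unfolding lam_def using q_pos T_pos by simp

lemma lam_pos: "lam > 0"
  unfolding lam_def using q_pos T_pos by simp

lemma a_pos: "s < T \<Longrightarrow> a s > 0"
  unfolding a_def using T_pos by simp

lemma a_T: "a T = 0"
  unfolding a_def using T_pos q_pos by simp

lemma a_powr_q: "s \<le> T \<Longrightarrow> a s powr q = 1 - s / T"
  unfolding a_def using q_pos T_pos by (simp add: powr_powr)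

lemma norm_w: "s < T \<Longrightarrow> norm (w s) = norm (u s) / a s"
  unfolding w_def using a_pos[of s] by (simp add: divide_inverse mult.commute)

lemma norm_w_powr_q:
  assumes "s < T"
  shows "norm (w s) powr q = T * psi s"
proof -
  have "norm (w s) powr q = norm (u s) powr q / a s powr q"
    using a_pos[OF assms] by (simp add: norm_w[OF assms] powr_divide)
  also have "\<dots> = phi s / (1 - s / T)" using a_powr_q[of s] assms phi_eq by simp
  also have "\<dots> = T * psi s" unfolding psi_def using T_pos assms by (simp add: field_simps)
  finally show ?thesis .
qed

lemma norm_w_le_norm_f:
  assumes "0 \<le> s" "s < T"
  shows "norm (w s) \<le> norm f"
proof -
  have "T * psi s \<le> T * psi 0" using psi_antimono[of 0 s] assms T_pos by simp
  then have "norm (w s) powr q \<le> norm f powr q"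
    using norm_w_powr_q[OF assms(2)] T_pos flow_0 by (simp add: psi_def phi_eq)
  then show ?thesis using q_pos by (meson norm_ge_zero not_le powr_less_mono2)
qed

lemma norm_w_antimono:
  assumes "0 \<le> s" "s \<le> s'" "s' < T"
  shows "norm (w s') \<le> norm (w s)"
proof -
  have "norm (w s') powr q \<le> norm (w s) powr q"
    using psi_antimono[OF assms] norm_w_powr_q[of s] norm_w_powr_q[of s'] assms T_pos by simp
  then show ?thesis using q_pos by (meson norm_ge_zero not_le powr_less_mono2)
qed

lemma psi_lower_bound:
  assumes "0 < s" "s < T" "\<And>r. s \<le> r \<Longrightarrow> r < T \<Longrightarrow> c \<le> rayleigh r"
  shows "q * c \<le> psi s"
  using phi_lower_bound[OF assms] assms unfolding psi_def by (simp add: pos_le_divide_eq)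

lemma norm_w_powr_q_lower_bound:
  assumes "0 \<le> s" "s < T"
  shows "T * q * \<mu> \<le> norm (w s) powr q"
proof -
  have lower: "q * \<mu> \<le> psi r" if "0 < r" "r < T" for r
    using that rayleigh_ge_mu by (intro psi_lower_bound) auto
  have "q * \<mu> \<le> psi s"
  proof (cases "s = 0")
    case True
    then show ?thesis using lower[of "T / 2"] psi_antimono[of 0 "T / 2"] T_pos by simp
  qed (use lower assms in auto)
  then show ?thesis using norm_w_powr_q[OF assms(2)] T_pos by simp
qed

lemma J_w:
  assumes "0 < s" "s < T"
  shows "J (w s) = ereal (energy_w s)"
proof -
  have "J (w s) = ereal ((1 / a s) powr p) * J (u s)"
    using J_scaleR_pos[of "1 / a s" "u s"] a_pos[OF assms(2)] by (simp add: w_def divide_inverse)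
  then show ?thesis
    using a_pos[OF assms(2)] J_flow[OF assms(1)] by (simp add: energy_w_def powr_divide)
qed

lemma energy_w_eq_rayleigh:
  assumes "0 < s" "s < T"
  shows "p * energy_w s = rayleigh s * norm (w s) powr p"
proof -
  have "norm (u s) > 0" using flow_nonzero[of s] assms by auto
  then show ?thesis
    using a_pos[OF assms(2)]
    by (simp add: energy_w_def rayleigh_def sqnorm_powr norm_w[OF assms(2)] powr_divide powr_minus
        field_simps)
qed

lemma norm_w_lower_bound:
  assumes "0 \<le> s" "s < T"
  shows "(T * q * \<mu>) powr (1 / q) \<le> norm (w s)"
proof -
  have "(T * q * \<mu>) powr (1 / q) \<le> (norm (w s) powr q) powr (1 / q)"
    using norm_w_powr_q_lower_bound[OF assms] T_pos q_pos mu_pos by (intro powr_mono2) auto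
  then show ?thesis using q_pos by (simp add: powr_powr)
qed

lemma a_has_derivative:
  assumes "r < T"
  shows "(a has_real_derivative - (a r powr (p - 1) / (q * T))) (at r within {r..})"
proof -
  have "((\<lambda>s. 1 - s / T) has_real_derivative 0 - 1 / T) (at r within {r..})"
    by (intro DERIV_diff DERIV_const DERIV_cdivide[of "\<lambda>x. x" 1, simplified] DERIV_ident)
  then have "(a has_real_derivative 1 / q * (1 - r / T) powr (1 / q - 1) * (0 - 1 / T)) (at r within {r..})"
    unfolding a_def[abs_def] using assms T_pos by (intro DERIV_chain2[OF has_real_derivative_powr]) auto
  moreover have "(1 - r / T) powr (1 / q - 1) = a r powr (p - 1)"
    unfolding a_def using q_pos assms T_pos by (simp add: powr_powr q_def field_simps)
  ultimately show ?thesis by simp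
qed

lemma continuous_on_a: "continuous_on {s..T} a"
  unfolding a_def using q_pos T_pos
  by (intro continuous_on_powr' continuous_intros) (auto simp: field_simps)

text \<open>Test the subgradient inequality at \<open>u r\<close> with \<open>a r v\<close> and use Euler's identity.\<close>

lemma zeta_inner_le:
  assumes r: "0 < r" "r < T" and v: "J v = ereal jv" and B: "energy_w r \<le> B"
  shows "zeta r \<bullet> v \<le> a r powr (p - 1) * (jv + (p - 1) * B)"
proof -
  have a: "a r > 0" using a_pos r by simp
  have J_av: "J (a r *\<^sub>R v) = ereal (a r powr p * jv)" using J_scaleR_pos[OF a, of v] v by simp
  have "energy r + zeta r \<bullet> (a r *\<^sub>R v - u r) \<le> real_of_ereal (J (a r *\<^sub>R v))"
    by (rule subgradient_inequality_flow[OF r(1)]) (simp add: J_av)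
  moreover have "energy r = a r powr p * energy_w r" using a by (simp add: energy_w_def)
  ultimately have "a r * (zeta r \<bullet> v) \<le> a r powr p * (jv + (p - 1) * energy_w r)"
    using zeta_inner_flow[OF r(1)] J_av by (simp add: inner_diff_right algebra_simps)
  also have "\<dots> \<le> a r powr p * (jv + (p - 1) * B)"
    using B p_ge_1 by (intro mult_left_mono add_left_mono) auto
  also have "a r powr p = a r * a r powr (p - 1)"
    using powr_mult_base[of "a r" "p - 1"] a by simp
  finally show ?thesis using a by (simp add: mult.assoc)
qed


text \<open>The comparison function \<open>K / lam * a s - u s \<bullet> v\<close> is nonincreasing by
  \<open>zeta_inner_le\<close> and vanishes at \<open>T\<close>.\<close>

lemma inner_flow_le_a:
  assumes v: "J v = ereal jv" and "0 < S" and bound: "\<And>r. S \<le> r \<Longrightarrow> r < T \<Longrightarrow> energy_w r \<le> B"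
    and s: "S \<le> s" "s \<le> T"
  shows "u s \<bullet> v \<le> (jv + (p - 1) * B) / lam * a s"
proof -
  define K where "K = jv + (p - 1) * B"
  define g where "g s = K / lam * a s - u s \<bullet> v" for s
  have "g T \<le> g s"
  proof (rule le_if_right_derivative_nonpos[where g = g])
    show "continuous_on {s..T} g" unfolding g_def using s \<open>0 < S\<close>
      by (intro continuous_intros continuous_on_a continuous_on_subset[OF continuous_on_flow]) auto
    fix r assume r: "s < r" "r < T"
    then have "0 < r" using s \<open>0 < S\<close> by simp
    show "(g has_real_derivative K / lam * - (a r powr (p - 1) / (q * T)) - (u r \<bullet> 0 + - zeta r \<bullet> v))
        (at r within {r..})"
      unfolding g_def[abs_def]
      by (intro DERIV_diff DERIV_cmult a_has_derivative has_real_derivative_inner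
          flow_has_vector_derivative \<open>0 < r\<close> r has_vector_derivative_const)
    have "zeta r \<bullet> v \<le> a r powr (p - 1) * K"
      unfolding K_def using r s by (intro zeta_inner_le[OF \<open>0 < r\<close> r(2) v] bound) auto
    moreover have "K / lam * - (a r powr (p - 1) / (q * T)) = - K * a r powr (p - 1)"
      using lam_q_T lam_pos q_pos T_pos by (simp add: field_simps)
    ultimately show "K / lam * - (a r powr (p - 1) / (q * T)) - (u r \<bullet> 0 + - zeta r \<bullet> v) \<le> 0"
      by (simp add: algebra_simps)
  qed (use s in auto)
  then show ?thesis using a_T flow_vanishes[of T] unfolding g_def K_def by simp
qed
end

lemma (in brezis_flow) extinction_profile:
  assumes f: "f \<in> H0 J" and coercive: "lambda1 p J > 0" and p: "1 \<le> p" "p < 2"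
    and finite_extinction: "\<exists>T>0. \<forall>s\<ge>T. u s = 0"
  obtains \<mu> where "extinction_profile J p u f (extinction_time u) \<mu>"
proof -
  let ?T = "extinction_time u"
  have "f \<noteq> 0" using f by (simp add: H0_def)
  note T = extinction_time[OF finite_extinction this]
  have lower: "lambda1 p J \<le> ereal (p * energy s / norm (u s) powr p)" if "0 < s" "s < ?T" for s
    using rayleigh_quotient_ge_lambda1[OF f] T(3)[of s] that by simp
  obtain \<mu> where \<mu>: "lambda1 p J = ereal \<mu>"
    using lower[of "?T / 2"] T(1) coercive by (cases "lambda1 p J") auto
  have "\<mu> * norm (u s) powr p \<le> p * energy s" if "0 < s" "s < ?T" for s
    using lower[OF that] \<mu> T(3)[of s] that by (simp add: pos_le_divide_eq)
  then have "extinction_profile J p u f ?T \<mu>"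
    using T p coercive \<mu> by unfold_locales auto
  then show ?thesis by (rule that)
qed

section \<open>The limit profile\<close>

locale extinction_profile_limit = extinction_profile J p u f T \<mu>
  for J :: "'a::{real_inner, complete_space} \<Rightarrow> ereal" and p u f T \<mu> +
  fixes t :: "nat \<Rightarrow> real" and w\<^sub>s :: 'a
  assumes t_nonneg: "\<And>k. 0 \<le> t k" and t_less_T: "\<And>k. t k < T" and t_tendsto: "t \<longlonglongrightarrow> T"
    and w_tendsto: "(\<lambda>k. w (t k)) \<longlonglongrightarrow> w\<^sub>s" and lsc: "ereal_lsc J"
begin

definition ell :: real where "ell = norm w\<^sub>s"

lemma eventually_t_greater: "s < T \<Longrightarrow> \<forall>\<^sub>F k in sequentially. s < t k"
  using order_tendstoD(1)[OF t_tendsto] by auto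

lemma norm_w_tendsto: "(\<lambda>k. norm (w (t k))) \<longlonglongrightarrow> ell"
  unfolding ell_def by (intro tendsto_intros w_tendsto)

lemma norm_w_lim_le_norm_f: "norm w\<^sub>s \<le> norm f"
  using tendsto_le[OF trivial_limit_sequentially tendsto_const norm_w_tendsto]
    norm_w_le_norm_f t_nonneg t_less_T
  unfolding ell_def by auto

lemma ell_pos: "ell > 0"
proof -
  have "(T * q * \<mu>) powr (1 / q) \<le> ell"
    using tendsto_le[OF trivial_limit_sequentially norm_w_tendsto tendsto_const]
      norm_w_lower_bound t_nonneg t_less_T by auto
  moreover have "(T * q * \<mu>) powr (1 / q) > 0" using T_pos q_pos mu_pos by simp
  ultimately show ?thesis by linarith
qed

lemma w_lim_nonzero: "w\<^sub>s \<noteq> 0"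
  using ell_pos unfolding ell_def by auto

text \<open>If the Rayleigh quotient stayed above \<open>lam * ell powr q + e\<close>, then
  \<open>psi_lower_bound\<close> would keep \<open>norm (w s) powr q\<close> a fixed amount above its limit
  \<open>ell powr q\<close>.\<close>

lemma exists_rayleigh_le:
  assumes "e > 0"
  shows "\<exists>s. 0 < s \<and> s < T \<and> rayleigh s \<le> lam * ell powr q + e"
proof (rule ccontr)
  assume contra: "\<not> ?thesis"
  have "q * (lam * ell powr q + e) \<le> psi s" if "0 < s" "s < T" for s
    using that contra by (intro psi_lower_bound) (auto simp: not_le intro: less_imp_le)
  then have "T * (q * (lam * ell powr q + e)) \<le> norm (w s) powr q" if "0 < s" "s < T" for s
    using that norm_w_powr_q[of s] T_pos by simp
  moreover have "T * (q * (lam * ell powr q + e)) = ell powr q + T * q * e"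
    using lam_q_T by (simp add: algebra_simps)
  ultimately have "\<forall>\<^sub>F k in sequentially. ell powr q + T * q * e \<le> norm (w (t k)) powr q"
    using eventually_t_greater[OF T_pos] t_less_T by (auto elim: eventually_mono)
  moreover have "(\<lambda>k. norm (w (t k)) powr q) \<longlonglongrightarrow> ell powr q"
    using ell_pos by (intro tendsto_powr norm_w_tendsto tendsto_const) auto
  ultimately have "ell powr q + T * q * e \<le> ell powr q"
    by (intro tendsto_le[OF trivial_limit_sequentially _ tendsto_const])
  moreover have "T * q * e > 0" using T_pos q_pos \<open>e > 0\<close> by simp
  ultimately show False by simp
qed

lemma exists_slack:
  assumes "\<delta> > 0"
  obtains e where "e > 0" "(lam * ell powr q + e) * (ell + e) powr p < lam * ell ^ 2 + \<delta>"
proof -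
  define F where "F e = (lam * ell powr q + e) * (ell + e) powr p" for e
  have "F 0 = lam * ell powr (q + p)" unfolding F_def using ell_pos by (simp add: powr_add)
  then have F0: "F 0 = lam * ell ^ 2" using ell_pos by (simp add: q_def)
  have "(F \<longlongrightarrow> F 0) (at_right 0)" unfolding F_def
    by (rule tendsto_within_subset[of _ _ _ UNIV])
      (auto intro!: tendsto_eq_intros simp: ell_pos ell_pos[THEN less_imp_neq, symmetric])
  then have "\<forall>\<^sub>F e in at_right 0. F e < lam * ell ^ 2 + \<delta>"
    using assms F0 by (intro order_tendstoD) auto
  then obtain b where "b > 0" and b: "\<And>e. 0 < e \<Longrightarrow> e < b \<Longrightarrow> F e < lam * ell ^ 2 + \<delta>"
    unfolding eventually_at_right_field by auto
  then show ?thesis using that[of "b / 2"] unfolding F_def by simp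
qed

lemma energy_w_eventually_le:
  assumes "\<delta> > 0"
  obtains S where "0 < S" "S < T" "\<And>s. S \<le> s \<Longrightarrow> s < T \<Longrightarrow> p * energy_w s \<le> lam * ell ^ 2 + \<delta>"
proof -
  obtain e where e: "e > 0" "(lam * ell powr q + e) * (ell + e) powr p < lam * ell ^ 2 + \<delta>"
    using exists_slack[OF assms] .
  obtain s\<^sub>1 where s\<^sub>1: "0 < s\<^sub>1" "s\<^sub>1 < T" "rayleigh s\<^sub>1 \<le> lam * ell powr q + e"
    using exists_rayleigh_le[OF e(1)] by blast
  have "\<forall>\<^sub>F k in sequentially. norm (w (t k)) < ell + e \<and> 0 < t k"
    using order_tendstoD(2)[OF norm_w_tendsto] eventually_t_greater[OF T_pos] e(1)
    by (auto intro: eventually_conj)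
  then obtain k where k: "norm (w (t k)) < ell + e" "0 < t k" unfolding eventually_sequentially by auto
  show ?thesis
  proof (rule that[of "max s\<^sub>1 (t k)"])
    show "0 < max s\<^sub>1 (t k)" "max s\<^sub>1 (t k) < T" using s\<^sub>1 t_less_T[of k] by auto
    fix s assume s: "max s\<^sub>1 (t k) \<le> s" "s < T"
    have "rayleigh s \<le> lam * ell powr q + e" using rayleigh_antimono[of s\<^sub>1 s] s\<^sub>1 s by auto
    moreover have "0 \<le> rayleigh s" using rayleigh_ge_mu[of s] mu_pos s s\<^sub>1 by auto
    moreover have "norm (w s) \<le> ell + e"
      using norm_w_antimono[of "t k" s] k s t_nonneg[of k] by auto
    ultimately have "rayleigh s * norm (w s) powr p \<le> (lam * ell powr q + e) * (ell + e) powr p"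
      using p_ge_1 lam_pos e(1) by (intro mult_mono powr_mono2) auto
    then show "p * energy_w s \<le> lam * ell ^ 2 + \<delta>"
      using energy_w_eq_rayleigh[of s] s s\<^sub>1 e(2) by auto
  qed
qed

lemma inner_w_lim_le_approx:
  assumes v: "J v = ereal jv" and "\<delta> > 0"
  shows "lam * (w\<^sub>s \<bullet> v) \<le> jv + (p - 1) * (lam * ell ^ 2 / p + \<delta>)"
proof -
  define K where "K = jv + (p - 1) * (lam * ell ^ 2 / p + \<delta>)"
  obtain S where S: "0 < S" "S < T"
    and bound: "\<And>s. S \<le> s \<Longrightarrow> s < T \<Longrightarrow> p * energy_w s \<le> lam * ell ^ 2 + p * \<delta>"
    using energy_w_eventually_le[of "p * \<delta>"] \<open>\<delta> > 0\<close> p_ge_1 by auto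
  have "energy_w s \<le> lam * ell ^ 2 / p + \<delta>" if "S \<le> s" "s < T" for s
    using bound[OF that] p_ge_1 by (simp add: field_simps)
  then have u_bound: "u s \<bullet> v \<le> K / lam * a s" if "S \<le> s" "s < T" for s
    unfolding K_def using that S by (intro inner_flow_le_a[OF v]) auto
  have "\<forall>\<^sub>F k in sequentially. w (t k) \<bullet> v \<le> K / lam"
    using eventually_t_greater[OF S(2)]
  proof eventually_elim
    case (elim k)
    then have "(u (t k) \<bullet> v) / a (t k) \<le> K / lam"
      using u_bound[of "t k"] t_less_T[of k] a_pos[OF t_less_T[of k]]
      by (simp add: pos_divide_le_eq mult.commute)
    then show ?case unfolding w_def by (simp add: divide_inverse mult.commute)
  qed
  with tendsto_inner[OF w_tendsto tendsto_const[of v]] have "w\<^sub>s \<bullet> v \<le> K / lam"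
    by (rule tendsto_le[OF trivial_limit_sequentially tendsto_const])
  then show ?thesis unfolding K_def using lam_pos by (simp add: pos_le_divide_eq mult.commute)
qed

lemma inner_w_lim_le:
  assumes "J v = ereal jv"
  shows "lam * (w\<^sub>s \<bullet> v) \<le> jv + (p - 1) * (lam * ell ^ 2 / p)"
proof (rule field_le_epsilon)
  fix e :: real assume "e > 0"
  have "(p - 1) * e \<le> e" using p_ge_1 p_less_2 \<open>e > 0\<close> by (simp add: mult_le_cancel_right1)
  then show "lam * (w\<^sub>s \<bullet> v) \<le> jv + (p - 1) * (lam * ell ^ 2 / p) + e"
    using inner_w_lim_le_approx[OF assms \<open>e > 0\<close>] by (simp add: algebra_simps)
qed

lemma J_w_lim_le: "J w\<^sub>s \<le> ereal (lam * ell ^ 2 / p)"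
proof -
  have approx: "J w\<^sub>s \<le> ereal (lam * ell ^ 2 / p + \<delta>)" if \<delta>: "\<delta> > 0" for \<delta>
  proof -
    obtain S where S: "0 < S" "S < T" and bound: "\<And>s. S \<le> s \<Longrightarrow> s < T \<Longrightarrow> p * energy_w s \<le> lam * ell ^ 2 + p * \<delta>"
      using energy_w_eventually_le[of "p * \<delta>"] \<delta> p_ge_1 by auto
    have "closed {x. J x \<le> ereal (lam * ell ^ 2 / p + \<delta>)}" using lsc by (simp add: ereal_lsc_def)
    moreover have "\<forall>\<^sub>F k in sequentially. w (t k) \<in> {x. J x \<le> ereal (lam * ell ^ 2 / p + \<delta>)}"
      using eventually_t_greater[OF S(2)]
    proof eventually_elim
      case (elim k)
      then have "0 < t k" "t k < T" using S t_less_T[of k] by auto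
      moreover have "energy_w (t k) \<le> lam * ell ^ 2 / p + \<delta>"
        using bound[of "t k"] elim t_less_T[of k] p_ge_1 by (simp add: field_simps)
      ultimately show ?case using J_w by simp
    qed
    ultimately have "w\<^sub>s \<in> {x. J x \<le> ereal (lam * ell ^ 2 / p + \<delta>)}"
      by (rule Lim_in_closed_set[OF _ _ trivial_limit_sequentially w_tendsto])
    then show ?thesis by simp
  qed
  have "J w\<^sub>s \<noteq> \<infinity>" using approx[of 1] by auto
  then obtain x where x: "J w\<^sub>s = ereal x" using J_not_minf[of w\<^sub>s] by (cases "J w\<^sub>s") auto
  have "x \<le> lam * ell ^ 2 / p"
  proof (rule field_le_epsilon)
    fix e :: real assume "e > 0"
    from approx[OF this] x show "x \<le> lam * ell ^ 2 / p + e" by simp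
  qed
  then show ?thesis using x by simp
qed

theorem lam_w_lim_in_subdiff: "lam *\<^sub>R w\<^sub>s \<in> subdiff J w\<^sub>s"
  unfolding subdiff_def
proof (intro CollectI allI)
  fix v
  obtain x where x: "J w\<^sub>s = ereal x" "x \<le> lam * ell ^ 2 / p"
    using J_w_lim_le J_not_minf[of w\<^sub>s] by (cases "J w\<^sub>s") auto
  have inner: "(lam *\<^sub>R w\<^sub>s) \<bullet> (v - w\<^sub>s) = lam * (w\<^sub>s \<bullet> v) - lam * ell ^ 2"
    unfolding ell_def by (simp add: inner_diff_right power2_norm_eq_inner algebra_simps)
  show "J w\<^sub>s + ereal ((lam *\<^sub>R w\<^sub>s) \<bullet> (v - w\<^sub>s)) \<le> J v"
  proof (cases "J v")
    case (real jv)
    have "(p - 1) * (lam * ell ^ 2 / p) + lam * ell ^ 2 / p = lam * ell ^ 2"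
      using p_ge_1 by (simp add: field_simps)
    then have "x + (lam * (w\<^sub>s \<bullet> v) - lam * ell ^ 2) \<le> jv"
      using inner_w_lim_le[OF real] x(2) by linarith
    then show ?thesis using x(1) real inner by simp
  qed (use x in auto)
qed

end

theorem theorem3:
  fixes J :: "'a::{real_inner, complete_space} \<Rightarrow> ereal"
    and p :: real and f w\<^sub>s :: 'a and u :: "real \<Rightarrow> 'a" and t :: "nat \<Rightarrow> real"
  assumes convex: "ereal_convex J"
    and lsc: "ereal_lsc J"
    and proper: "ereal_proper J"
    and dense: "closure (eff_dom J) = UNIV"
    and homog: "abs_p_homogeneous p J"
    and coercive: "lambda1 p J > 0"
    and p: "1 \<le> p" "p < 2"
    and f: "f \<in> H0 J"
    and flow: "gradient_flow J f u"
    and finite_ext: "\<exists>T>0. \<forall>s\<ge>T. u s = 0"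
    and seq: "incseq t" "\<forall>k. 0 \<le> t k \<and> t k < extinction_time u"
             "t \<longlonglongrightarrow> extinction_time u"
    and conv: "(\<lambda>k. u (t k) /\<^sub>R
                 ((1 - (2 - p) * (1 / ((2 - p) * extinction_time u)) * t k) powr (1 / (2 - p))))
               \<longlonglongrightarrow> w\<^sub>s"
  shows "(1 / ((2 - p) * extinction_time u)) *\<^sub>R w\<^sub>s \<in> subdiff J w\<^sub>s
         \<and> w\<^sub>s \<noteq> 0 \<and> norm w\<^sub>s \<le> norm f"
proof -
  interpret brezis_flow J p u f
    using convex proper homog flow by unfold_locales
  obtain \<mu> where "extinction_profile J p u f (extinction_time u) \<mu>"
    using extinction_profile[OF f coercive p finite_ext] .
  then interpret extinction_profile J p u f "extinction_time u" \<mu> .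
  have "(1 - (2 - p) * (1 / ((2 - p) * extinction_time u)) * s) powr (1 / (2 - p)) = a s" for s
    using p T_pos by (simp add: a_def q_def)
  with conv have "(\<lambda>k. w (t k)) \<longlonglongrightarrow> w\<^sub>s" by (simp add: w_def)
  then interpret extinction_profile_limit J p u f "extinction_time u" \<mu> t w\<^sub>s
    using seq lsc by unfold_locales auto
  have "lam = 1 / ((2 - p) * extinction_time u)" by (simp add: lam_def q_def)
  then show ?thesis using lam_w_lim_in_subdiff w_lim_nonzero norm_w_lim_le_norm_f by simp
qed

end
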